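(* Let $\langle U,B\rangle$ be a 3-frame and consider the Boolean algebra $2^U$ with the operators $\langle B\rangle(X,Y)=\{u\in U\mid\exists x\in X\,\exists y\in Y\,B(x,u,y)\}$ and $[\![B]\!](X,Y)=\{u\in U\mid\forall x\in X\,\forall y\in Y\,B(x,u,y)\}$. Let $\mathcal U_1,\mathcal U_2,\mathcal U_3$ be principal ultrafilters of $2^U$. Then $Q_{\langle B\rangle}(\mathcal U_1,\mathcal U_2,\mathcal U_3)$ implies $S_{[\![B]\!]}(\mathcal U_1,\mathcal U_2,\mathcal U_3)$. In particular, if $U$ is finite, then $Q_{\langle B\rangle}=S_{[\![B]\!]}$.
   Context: A 3-frame is $\langle U,B\rangle$ with $U$ a non-empty set and $B\subseteq U^3$. For binary operators $f,g$ on $2^U$ and ultrafilters $\mathcal U_1,\mathcal U_2,\mathcal U_3$ of $2^U$: $Q_f(\mathcal U_1,\mathcal U_2,\mathcal U_3)\iff f[\mathcal U_1\times\mathcal U_3]\subseteq\mathcal U_2$ and $S_g(\mathcal U_1,\mathcal U_2,\mathcal U_3)\iff g[\mathcal U_1\times\mathcal U_3]\cap\mathcal U_2\neq\emptyset$. A principal ultrafilter of $2^U$ is one of the form $\{X\subseteq U\mid x\in X\}$ for some $x\in U$. *)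

theory Defs
  imports Main
begin

text \<open>The Boolean algebra 2^U is represented by the subsets of U (elements of Pow U).\<close>

definition ultrafilter_of :: "'a set \<Rightarrow> 'a set set \<Rightarrow> bool" where
  "ultrafilter_of U F \<longleftrightarrow>
     F \<subseteq> Pow U \<and> U \<in> F \<and> {} \<notin> F \<and>
     (\<forall>X\<in>F. \<forall>Y\<in>F. X \<inter> Y \<in> F) \<and>
     (\<forall>X\<in>F. \<forall>Y. X \<subseteq> Y \<and> Y \<subseteq> U \<longrightarrow> Y \<in> F) \<and>
     (\<forall>X. X \<subseteq> U \<longrightarrow> X \<in> F \<or> U - X \<in> F)"

definition principal_ultrafilter_of :: "'a set \<Rightarrow> 'a set set \<Rightarrow> bool" where
  "principal_ultrafilter_of U F \<longleftrightarrow>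
     ultrafilter_of U F \<and> (\<exists>x\<in>U. F = {X. X \<subseteq> U \<and> x \<in> X})"

definition diamond_op :: "'a set \<Rightarrow> ('a \<times> 'a \<times> 'a) set \<Rightarrow> 'a set \<Rightarrow> 'a set \<Rightarrow> 'a set" where
  "diamond_op U B X Y = {u \<in> U. \<exists>x\<in>X. \<exists>y\<in>Y. (x, u, y) \<in> B}"

definition box_op :: "'a set \<Rightarrow> ('a \<times> 'a \<times> 'a) set \<Rightarrow> 'a set \<Rightarrow> 'a set \<Rightarrow> 'a set" where
  "box_op U B X Y = {u \<in> U. \<forall>x\<in>X. \<forall>y\<in>Y. (x, u, y) \<in> B}"

definition Q_rel :: "('a set \<Rightarrow> 'a set \<Rightarrow> 'a set) \<Rightarrow> 'a set set \<Rightarrow> 'a set set \<Rightarrow> 'a set set \<Rightarrow> bool" where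
  "Q_rel f U1 U2 U3 \<longleftrightarrow> (\<forall>X\<in>U1. \<forall>Y\<in>U3. f X Y \<in> U2)"

definition S_rel :: "('a set \<Rightarrow> 'a set \<Rightarrow> 'a set) \<Rightarrow> 'a set set \<Rightarrow> 'a set set \<Rightarrow> 'a set set \<Rightarrow> bool" where
  "S_rel g U1 U2 U3 \<longleftrightarrow> (\<exists>X\<in>U1. \<exists>Y\<in>U3. g X Y \<in> U2)"

end

theory Submission
  imports Defs
begin

text \<open>Both relations, evaluated at the principal ultrafilters generated by points
  \<open>x\<^sub>1, x\<^sub>2, x\<^sub>3\<close>, reduce to \<open>B(x\<^sub>1, x\<^sub>2, x\<^sub>3)\<close>: for \<open>Q\<close> it suffices to test the singletons
  \<open>{x\<^sub>1}, {x\<^sub>3}\<close>, and \<open>S\<close> is witnessed by exactly these singletons. On a finite set every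
  ultrafilter contains a singleton and is therefore principal.\<close>

definition principal_filter_on :: "'a set \<Rightarrow> 'a \<Rightarrow> 'a set set" where
  "principal_filter_on U x = {X. X \<subseteq> U \<and> x \<in> X}"

lemma principal_ultrafilter_ofE:
  assumes "principal_ultrafilter_of U F"
  obtains x where "x \<in> U" and "F = principal_filter_on U x"
  using assms unfolding principal_ultrafilter_of_def principal_filter_on_def by blast

lemma ultrafilter_of_subset: "ultrafilter_of U F \<Longrightarrow> X \<in> F \<Longrightarrow> X \<subseteq> U"
  unfolding ultrafilter_of_def by (elim conjE) blast

lemma ultrafilter_of_top: "ultrafilter_of U F \<Longrightarrow> U \<in> F"
  unfolding ultrafilter_of_def by (elim conjE)

lemma ultrafilter_of_empty: "ultrafilter_of U F \<Longrightarrow> {} \<notin> F"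
  unfolding ultrafilter_of_def by (elim conjE)

lemma ultrafilter_of_Int: "ultrafilter_of U F \<Longrightarrow> X \<in> F \<Longrightarrow> Y \<in> F \<Longrightarrow> X \<inter> Y \<in> F"
  unfolding ultrafilter_of_def by (elim conjE) blast

lemma ultrafilter_of_mono:
  "ultrafilter_of U F \<Longrightarrow> X \<in> F \<Longrightarrow> X \<subseteq> Y \<Longrightarrow> Y \<subseteq> U \<Longrightarrow> Y \<in> F"
  unfolding ultrafilter_of_def by (elim conjE) blast

lemma ultrafilter_of_compl: "ultrafilter_of U F \<Longrightarrow> X \<subseteq> U \<Longrightarrow> X \<notin> F \<Longrightarrow> U - X \<in> F"
  unfolding ultrafilter_of_def by (elim conjE) blast

lemma ultrafilter_of_finite_member_imp_singleton:
  assumes uf: "ultrafilter_of U F" and "finite A" and "A \<in> F"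
  shows "\<exists>x. {x} \<in> F"
  using \<open>finite A\<close> \<open>A \<in> F\<close>
proof (induction A rule: finite_induct)
  case empty
  then show ?case using ultrafilter_of_empty[OF uf] by simp
next
  case (insert a A)
  show ?case
  proof (cases "{a} \<in> F")
    case True
    then show ?thesis by blast
  next
    case False
    have "insert a A \<subseteq> U" using ultrafilter_of_subset[OF uf insert.prems] .
    then have "U - {a} \<in> F" using ultrafilter_of_compl[OF uf _ False] by simp
    then have "insert a A \<inter> (U - {a}) \<in> F" using ultrafilter_of_Int[OF uf insert.prems] by blast
    moreover have "insert a A \<inter> (U - {a}) = A" using insert.hyps \<open>insert a A \<subseteq> U\<close> by auto
    ultimately show ?thesis using insert.IH by simp
  qed
qed

lemma ultrafilter_of_singleton_imp_principal:
  assumes uf: "ultrafilter_of U F" and x: "{x} \<in> F"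
  shows "x \<in> U" and "F = principal_filter_on U x"
proof -
  show "x \<in> U" using ultrafilter_of_subset[OF uf x] by simp
  show "F = principal_filter_on U x"
  proof (intro equalityI subsetI)
    fix X assume X: "X \<in> F"
    have "{x} \<inter> X \<in> F" using ultrafilter_of_Int[OF uf x X] .
    then have "x \<in> X" using ultrafilter_of_empty[OF uf] by (cases "x \<in> X") auto
    moreover have "X \<subseteq> U" using ultrafilter_of_subset[OF uf X] .
    ultimately show "X \<in> principal_filter_on U x" by (simp add: principal_filter_on_def)
  next
    fix X assume "X \<in> principal_filter_on U x"
    then have "{x} \<subseteq> X" and "X \<subseteq> U" by (auto simp: principal_filter_on_def)
    then show "X \<in> F" using ultrafilter_of_mono[OF uf x] by blast
  qed
qed

lemma ultrafilter_of_finite_imp_principal: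
  assumes uf: "ultrafilter_of U F" and "finite U"
  obtains x where "x \<in> U" and "F = principal_filter_on U x"
proof -
  obtain x where "{x} \<in> F"
    using ultrafilter_of_finite_member_imp_singleton[OF uf \<open>finite U\<close> ultrafilter_of_top[OF uf]]
    by blast
  then show thesis using that ultrafilter_of_singleton_imp_principal[OF uf] by blast
qed

lemma Q_rel_diamond_op_principal_iff:
  assumes "x\<^sub>1 \<in> U" and "x\<^sub>2 \<in> U" and "x\<^sub>3 \<in> U"
  shows "Q_rel (diamond_op U B) (principal_filter_on U x\<^sub>1) (principal_filter_on U x\<^sub>2)
           (principal_filter_on U x\<^sub>3) \<longleftrightarrow> (x\<^sub>1, x\<^sub>2, x\<^sub>3) \<in> B"
proof
  assume "Q_rel (diamond_op U B) (principal_filter_on U x\<^sub>1) (principal_filter_on U x\<^sub>2)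
            (principal_filter_on U x\<^sub>3)"
  then have "x\<^sub>2 \<in> diamond_op U B {x\<^sub>1} {x\<^sub>3}"
    using assms by (auto simp: Q_rel_def principal_filter_on_def)
  then show "(x\<^sub>1, x\<^sub>2, x\<^sub>3) \<in> B" by (simp add: diamond_op_def)
next
  assume "(x\<^sub>1, x\<^sub>2, x\<^sub>3) \<in> B"
  then show "Q_rel (diamond_op U B) (principal_filter_on U x\<^sub>1) (principal_filter_on U x\<^sub>2)
               (principal_filter_on U x\<^sub>3)"
    using assms by (auto simp: Q_rel_def diamond_op_def principal_filter_on_def)
qed

lemma S_rel_box_op_principal_iff:
  assumes "x\<^sub>1 \<in> U" and "x\<^sub>2 \<in> U" and "x\<^sub>3 \<in> U"
  shows "S_rel (box_op U B) (principal_filter_on U x\<^sub>1) (principal_filter_on U x\<^sub>2)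
           (principal_filter_on U x\<^sub>3) \<longleftrightarrow> (x\<^sub>1, x\<^sub>2, x\<^sub>3) \<in> B"
proof
  assume "S_rel (box_op U B) (principal_filter_on U x\<^sub>1) (principal_filter_on U x\<^sub>2)
            (principal_filter_on U x\<^sub>3)"
  then show "(x\<^sub>1, x\<^sub>2, x\<^sub>3) \<in> B" by (auto simp: S_rel_def box_op_def principal_filter_on_def)
next
  assume "(x\<^sub>1, x\<^sub>2, x\<^sub>3) \<in> B"
  then have "box_op U B {x\<^sub>1} {x\<^sub>3} \<in> principal_filter_on U x\<^sub>2"
    using assms by (auto simp: box_op_def principal_filter_on_def)
  moreover have "{x\<^sub>1} \<in> principal_filter_on U x\<^sub>1" and "{x\<^sub>3} \<in> principal_filter_on U x\<^sub>3"
    using assms by (auto simp: principal_filter_on_def)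
  ultimately show "S_rel (box_op U B) (principal_filter_on U x\<^sub>1) (principal_filter_on U x\<^sub>2)
                     (principal_filter_on U x\<^sub>3)"
    unfolding S_rel_def by blast
qed

theorem proposition47:
  fixes U :: "'a set" and B :: "('a \<times> 'a \<times> 'a) set"
  assumes "U \<noteq> {}" and "B \<subseteq> U \<times> U \<times> U"
  shows "(\<forall>U1 U2 U3. principal_ultrafilter_of U U1 \<and> principal_ultrafilter_of U U2 \<and>
            principal_ultrafilter_of U U3 \<longrightarrow>
            Q_rel (diamond_op U B) U1 U2 U3 \<longrightarrow> S_rel (box_op U B) U1 U2 U3)
       \<and> (finite U \<longrightarrow>
            (\<forall>U1 U2 U3. ultrafilter_of U U1 \<and> ultrafilter_of U U2 \<and> ultrafilter_of U U3 \<longrightarrow>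
               (Q_rel (diamond_op U B) U1 U2 U3 \<longleftrightarrow> S_rel (box_op U B) U1 U2 U3)))"
proof (intro conjI allI impI)
  fix U1 U2 U3
  assume "principal_ultrafilter_of U U1 \<and> principal_ultrafilter_of U U2 \<and>
    principal_ultrafilter_of U U3" and Q: "Q_rel (diamond_op U B) U1 U2 U3"
  then obtain x\<^sub>1 x\<^sub>2 x\<^sub>3 where "x\<^sub>1 \<in> U" "x\<^sub>2 \<in> U" "x\<^sub>3 \<in> U" and
    "U1 = principal_filter_on U x\<^sub>1" "U2 = principal_filter_on U x\<^sub>2" "U3 = principal_filter_on U x\<^sub>3"
    by (meson principal_ultrafilter_ofE)
  with Q show "S_rel (box_op U B) U1 U2 U3"
    by (simp add: Q_rel_diamond_op_principal_iff S_rel_box_op_principal_iff)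
next
  fix U1 U2 U3
  assume "finite U" and "ultrafilter_of U U1 \<and> ultrafilter_of U U2 \<and> ultrafilter_of U U3"
  then obtain x\<^sub>1 x\<^sub>2 x\<^sub>3 where "x\<^sub>1 \<in> U" "x\<^sub>2 \<in> U" "x\<^sub>3 \<in> U" and
    "U1 = principal_filter_on U x\<^sub>1" "U2 = principal_filter_on U x\<^sub>2" "U3 = principal_filter_on U x\<^sub>3"
    by (meson ultrafilter_of_finite_imp_principal)
  then show "Q_rel (diamond_op U B) U1 U2 U3 \<longleftrightarrow> S_rel (box_op U B) U1 U2 U3"
    by (simp add: Q_rel_diamond_op_principal_iff S_rel_box_op_principal_iff)
qed

end
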